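(* Let $\lambda_1,\lambda_2\in\mathbb{C}\setminus\{0,-1,-2,\dots\}$, set $\gamma=\lambda_1+\lambda_2-1$, and let $\alpha,\beta\in\mathbb{C}$ with $\alpha+\beta\notin\mathbb{Z}$, $\alpha\notin\{-1,-2,\dots\}$ and $\beta+\gamma\notin\{-1,-2,\dots\}$. On $W=V_{\lambda_1}\otimes V_{\lambda_2}$ put $H^{(1)}=H\otimes\mathbb{I}$, $H^{(2)}=\mathbb{I}\otimes H$, $D=H^{(1)}-H^{(2)}-\lambda_1+\lambda_2+2\alpha+2\beta+2$ (an invertible diagonal operator), and define $$\Delta(H)=H^{(1)}+H^{(2)},$$ $$\Delta(E)=D^{-1}\Big((H^{(1)}-\lambda_1+2\alpha+2\beta+2)(E\otimes\mathbb{I})+(\lambda_2-H^{(2)}+2\alpha+2\beta+2)(\mathbb{I}\otimes E)\Big),$$ $$\Delta(F)=D^{-1}\Big((H^{(1)}-\lambda_1+2\alpha+2)(H^{(1)}-\lambda_1+2\beta+2\gamma+2)(H^{(1)}+\lambda_1)^{-1}(F\otimes\mathbb{I})$$ $$\qquad\qquad+(\lambda_2-H^{(2)}+2\beta)(H^{(2)}-\lambda_2-2\alpha+2\gamma)(H^{(2)}+\lambda_2)^{-1}(\mathbb{I}\otimes F)\Big).$$ Then (a) these operators satisfy $[\Delta(H),\Delta(E)]=2\Delta(E)$, $[\Delta(H),\Delta(F)]=-2\Delta(F)$, $[\Delta(E),\Delta(F)]=\Delta(H)$, i.e. they give a representation of $sl_2$ on $W$; and (b) for all integers $0\le k\le N$,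 the vectors $w_{k,N}=\sum_{n=0}^N R_n(k,N)\,|\lambda_1,n\rangle\otimes|\lambda_2,N-n\rangle$ satisfy $\Delta(H)w_{k,N}=(\lambda_1+\lambda_2+2N)w_{k,N}$, $\Delta(E)w_{k,N}=w_{k,N+1}$ and $\Delta(F)w_{k,N}=-(N-k)(N+k+\gamma)\,w_{k,N-1}$ (with $w_{k,k-1}=0$); i.e. the $R_n(k,N)$ are Clebsch–Gordan coefficients for this generalized coproduct of $sl_2$.
   Context: $sl_2$ is generated by $H,E,F$ with $[H,E]=2E$, $[H,F]=-2F$, $[E,F]=H$. For $\lambda\in\mathbb{C}$, $V_\lambda$ has basis $\{|\lambda,n\rangle:n\ge0\}$ with $H|\lambda,n\rangle=(\lambda+2n)|\lambda,n\rangle$, $E|\lambda,n\rangle=|\lambda,n+1\rangle$, $F|\lambda,n\rangle=-n(n+\lambda-1)|\lambda,n-1\rangle$. The functions $R_n(k,N)$ (proportional to Racah polynomials) are $$R_n(k,N)=\binom{N}{n}\,{}_4F_3\!\left(\begin{matrix}-n,\ n+\alpha+\beta-N+1,\ -k,\ k+\gamma\\ \alpha+1,\ \beta+\gamma+1,\ -N\end{matrix}\;\Big|\;1\right)=\binom{N}{n}\sum_{j=0}^{\min(n,k)}\frac{(-n)_j(n+\alpha+\beta-N+1)_j(-k)_j(k+\gamma)_j}{j!(\alpha+1)_j(\beta+\gamma+1)_j(-N)_j},$$ with $(a)_j=a(a+1)\cdots(a+j-1)$. Operator products mean composition. *)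

theory Defs
  imports Complex_Main
begin

text \<open>A vector of W = V_l1 (x) V_l2 is represented by its coefficient function:
  v m n is the coefficient of |l1,m> (x) |l2,n>. Elements of W are the finitely
  supported ones.\<close>

type_synonym tvec = "nat \<Rightarrow> nat \<Rightarrow> complex"

definition in_W :: "tvec \<Rightarrow> bool" where
  "in_W v \<longleftrightarrow> finite {(m, n). v m n \<noteq> 0}"

definition vzero :: tvec where "vzero = (\<lambda>m n. 0)"
definition vadd :: "tvec \<Rightarrow> tvec \<Rightarrow> tvec" where "vadd u v = (\<lambda>m n. u m n + v m n)"
definition vsub :: "tvec \<Rightarrow> tvec \<Rightarrow> tvec" where "vsub u v = (\<lambda>m n. u m n - v m n)"
definition vscale :: "complex \<Rightarrow> tvec \<Rightarrow> tvec" where "vscale c v = (\<lambda>m n. c * v m n)"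

definition diag :: "(nat \<Rightarrow> nat \<Rightarrow> complex) \<Rightarrow> tvec \<Rightarrow> tvec" where
  "diag d v = (\<lambda>m n. d m n * v m n)"

text \<open>Eigenvalues of H (x) I and I (x) H.\<close>
definition h1 :: "complex \<Rightarrow> nat \<Rightarrow> nat \<Rightarrow> complex" where "h1 l1 m n = l1 + 2 * of_nat m"
definition h2 :: "complex \<Rightarrow> nat \<Rightarrow> nat \<Rightarrow> complex" where "h2 l2 m n = l2 + 2 * of_nat n"

text \<open>E|l,n> = |l,n+1>,  F|l,n> = -n(n+l-1)|l,n-1>, acting on one tensor factor.\<close>
definition E1 :: "tvec \<Rightarrow> tvec" where
  "E1 v = (\<lambda>m n. if m = 0 then 0 else v (m - 1) n)"
definition E2 :: "tvec \<Rightarrow> tvec" where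
  "E2 v = (\<lambda>m n. if n = 0 then 0 else v m (n - 1))"
definition F1 :: "complex \<Rightarrow> tvec \<Rightarrow> tvec" where
  "F1 l1 v = (\<lambda>m n. - (of_nat (m + 1) * (of_nat (m + 1) + l1 - 1)) * v (m + 1) n)"
definition F2 :: "complex \<Rightarrow> tvec \<Rightarrow> tvec" where
  "F2 l2 v = (\<lambda>m n. - (of_nat (n + 1) * (of_nat (n + 1) + l2 - 1)) * v m (n + 1))"

definition Dval :: "complex \<Rightarrow> complex \<Rightarrow> complex \<Rightarrow> complex \<Rightarrow> nat \<Rightarrow> nat \<Rightarrow> complex" where
  "Dval l1 l2 a b m n = h1 l1 m n - h2 l2 m n - l1 + l2 + 2*a + 2*b + 2"

definition DeltaH :: "complex \<Rightarrow> complex \<Rightarrow> tvec \<Rightarrow> tvec" where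
  "DeltaH l1 l2 = diag (\<lambda>m n. h1 l1 m n + h2 l2 m n)"

definition DeltaE :: "complex \<Rightarrow> complex \<Rightarrow> complex \<Rightarrow> complex \<Rightarrow> tvec \<Rightarrow> tvec" where
  "DeltaE l1 l2 a b v =
     diag (\<lambda>m n. inverse (Dval l1 l2 a b m n))
       (vadd (diag (\<lambda>m n. h1 l1 m n - l1 + 2*a + 2*b + 2) (E1 v))
             (diag (\<lambda>m n. l2 - h2 l2 m n + 2*a + 2*b + 2) (E2 v)))"

definition DeltaF :: "complex \<Rightarrow> complex \<Rightarrow> complex \<Rightarrow> complex \<Rightarrow> tvec \<Rightarrow> tvec" where
  "DeltaF l1 l2 a b v =
     (let g = l1 + l2 - 1 in
     diag (\<lambda>m n. inverse (Dval l1 l2 a b m n))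
       (vadd (diag (\<lambda>m n. (h1 l1 m n - l1 + 2*a + 2) * (h1 l1 m n - l1 + 2*b + 2*g + 2)
                            * inverse (h1 l1 m n + l1)) (F1 l1 v))
             (diag (\<lambda>m n. (l2 - h2 l2 m n + 2*b) * (h2 l2 m n - l2 - 2*a + 2*g)
                            * inverse (h2 l2 m n + l2)) (F2 l2 v))))"

definition commutator :: "(tvec \<Rightarrow> tvec) \<Rightarrow> (tvec \<Rightarrow> tvec) \<Rightarrow> tvec \<Rightarrow> tvec" where
  "commutator A B v = vsub (A (B v)) (B (A v))"

text \<open>R_n(k,N) = binom(N,n) 4F3(-n, n+a+b-N+1, -k, k+g; a+1, b+g+1, -N; 1).\<close>
definition Rcoef :: "complex \<Rightarrow> complex \<Rightarrow> complex \<Rightarrow> nat \<Rightarrow> nat \<Rightarrow> nat \<Rightarrow> complex" where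
  "Rcoef a b g n k N = of_nat (N choose n) *
     (\<Sum>j = 0..min n k.
        pochhammer (- of_nat n) j * pochhammer (of_nat n + a + b - of_nat N + 1) j
        * pochhammer (- of_nat k) j * pochhammer (of_nat k + g) j
        / (fact j * pochhammer (a + 1) j * pochhammer (b + g + 1) j * pochhammer (- of_nat N) j))"

definition wvec :: "complex \<Rightarrow> complex \<Rightarrow> complex \<Rightarrow> nat \<Rightarrow> nat \<Rightarrow> tvec" where
  "wvec a b g k N = (\<lambda>m n. if m + n = N then Rcoef a b g m k N else 0)"

end

theory Submission
  imports Defs
begin

text \<open>
  Write \<open>|m, p\<rangle>\<close> for \<open>|\<lambda>\<^sub>1, m\<rangle> \<otimes> |\<lambda>\<^sub>2, p\<rangle>\<close>. All three operators act diagonally up to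
  a shift of one tensor index, so the \<open>sl\<^sub>2\<close> relations reduce to identities between their
  coefficients; for \<open>[\<Delta>(E), \<Delta>(F)]\<close> the off-diagonal terms cancel and the diagonal one is a
  polynomial identity.

  For the Clebsch--Gordan vectors, the identity
  \<open>C(N, n) (-n)\<^sub>j / (-N)\<^sub>j = C(N - j, N - n)\<close> turns \<open>C(N, n)\<close> times the \<open>j\<close>-th term of
  the \<open>\<^sub>4F\<^sub>3\<close> into \<open>K\<^sub>k(j) \<cdot> C(N - j, p) (\<alpha> + \<beta> + 1 - p)\<^sub>j\<close> with \<open>p = N - n\<close>,
  where \<open>K\<^sub>k(j)\<close> (\<open>racahK\<close>) collects the factors involving \<open>k\<close>. Hence
  \<open>w\<^sub>k\<^sub>,\<^sub>N = \<Sum>\<^sub>j\<^sub>\<le>\<^sub>k K\<^sub>k(j) u\<^sub>j\<^sub>,\<^sub>N\<close> for vectors \<open>u\<^sub>j\<^sub>,\<^sub>N\<close> (\<open>uvec\<close>) not depending on \<open>k\<close>.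
  By Pascal's rule and the absorption identity, \<open>\<Delta>(E) u\<^sub>j\<^sub>,\<^sub>N = u\<^sub>j\<^sub>,\<^sub>N\<^sub>+\<^sub>1\<close> and
  \<open>\<Delta>(F) u\<^sub>j\<^sub>,\<^sub>N = -(N - j)(N + j + \<gamma>) u\<^sub>j\<^sub>,\<^sub>N\<^sub>-\<^sub>1 - j(\<alpha> + j)(\<beta> + \<gamma> + j) u\<^sub>j\<^sub>-\<^sub>1\<^sub>,\<^sub>N\<^sub>-\<^sub>1\<close>.
  After reindexing, the second term is absorbed by the recurrence expressing \<open>K\<^sub>k(j + 1)\<close>
  through \<open>K\<^sub>k(j)\<close>, and what remains is
  \<open>(N - j)(N + j + \<gamma>) + (j - k)(j + k + \<gamma>) = (N - k)(N + k + \<gamma>)\<close>.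
\<close>

lemma binomial_pochhammer_quotient:
  assumes "j \<le> N" "n \<le> N"
  shows "of_nat (N choose n) * pochhammer (- of_nat n) j / pochhammer (- of_nat N) j
         = (of_nat ((N - j) choose (N - n)) :: 'a::field_char_0)"
  using assms(1)
proof (induction j)
  case 0
  show ?case using assms(2) by (simp add: binomial_symmetric[symmetric])
next
  case (Suc j)
  have "N - j \<noteq> 0" using Suc.prems by simp
  have absorb: "(of_nat n - of_nat j) * of_nat ((N - j) choose (N - n))
      = (of_nat (N - j) * of_nat ((N - Suc j) choose (N - n)) :: 'a)"
  proof (cases "j \<le> n")
    case True
    have "(N - j - (N - n)) * ((N - j) choose (N - n)) = (N - j) * ((N - Suc j) choose (N - n))"
      using binomial_absorb_comp[of "N - j" "N - n"] by simp
    then have "of_nat (N - j - (N - n)) * of_nat ((N - j) choose (N - n))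
        = (of_nat (N - j) * of_nat ((N - Suc j) choose (N - n)) :: 'a)"
      by (metis of_nat_mult)
    moreover have "of_nat n - of_nat j = (of_nat (N - j - (N - n)) :: 'a)"
      using True assms(2) by simp
    ultimately show ?thesis by simp
  qed (use assms(2) Suc.prems in \<open>simp add: binomial_eq_0\<close>)
  have "pochhammer (- of_nat N) j \<noteq> (0 :: 'a)" "- of_nat N + of_nat j \<noteq> (0 :: 'a)"
    using Suc.prems by (simp_all add: pochhammer_of_nat_eq_0_iff)
  then have "of_nat (N choose n) * pochhammer (- of_nat n) (Suc j) / pochhammer (- of_nat N) (Suc j)
      = (of_nat n - of_nat j) / (of_nat N - of_nat j)
        * (of_nat (N choose n) * pochhammer (- of_nat n) j / pochhammer (- of_nat N) j :: 'a)"
    by (simp add: pochhammer_rec' field_simps)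
  also have "\<dots> = of_nat ((N - Suc j) choose (N - n))"
    using Suc.IH Suc.prems absorb \<open>N - j \<noteq> 0\<close> by (simp add: of_nat_diff field_simps)
  finally show ?case .
qed

lemma of_nat_Suc_times_binomial_Suc:
  "(of_nat p + 1) * of_nat (s choose Suc p)
     = ((of_nat s - of_nat p) * of_nat (s choose p) :: 'a::comm_ring_1)"
proof (cases "p \<le> s")
  case True
  have "Suc p * (s choose Suc p) = (s - p) * (s choose p)"
    by (metis binomial_absorb_comp binomial_absorption diff_Suc_1 mult.commute)
  then show ?thesis
    using True by (metis of_nat_Suc of_nat_mult of_nat_diff add.commute)
qed (simp add: binomial_eq_0)

lemma of_nat_times_binomial_pred:
  "of_nat s * of_nat ((s - 1) choose p)
     = ((of_nat s - of_nat p) * of_nat (s choose p) :: 'a::comm_ring_1)"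
proof (cases "p \<le> s")
  case True
  then show ?thesis
    using binomial_absorb_comp[of s p] by (metis of_nat_mult of_nat_diff)
qed (simp add: binomial_eq_0)

lemma plus_Suc_nonzero:
  assumes "\<forall>j::nat. x \<noteq> - of_nat (Suc j)"
  shows "x + of_nat i + 1 \<noteq> (0::complex)"
proof
  assume "x + of_nat i + 1 = 0"
  then have "x = - of_nat (Suc i)" by (simp add: add_eq_0_iff algebra_simps)
  with assms show False by blast
qed

lemma cross_terms_cancel:
  fixes d dm dp :: "'a::field"
  assumes "d \<noteq> 0" "dm \<noteq> 0" "dp \<noteq> 0"
    and "e1 * f1' * dp + e2 * f2' * dm - f1 * e1' * dm - f2 * e2' * dp = h * d * dm * dp"
  shows "(e1 * ((f1' * x + f2 * y) / dm) + e2 * ((f1 * z + f2' * x) / dp)) / d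
       - (f1 * ((e1' * x + e2 * z) / dp) + f2 * ((e1 * y + e2' * x) / dm)) / d = h * x"
proof -
  have "(e1 * ((f1' * x + f2 * y) / dm) + e2 * ((f1 * z + f2' * x) / dp)) / d
       - (f1 * ((e1' * x + e2 * z) / dp) + f2 * ((e1 * y + e2' * x) / dm)) / d
      = (e1 * f1' * dp + e2 * f2' * dm - f1 * e1' * dm - f2 * e2' * dp) * x / (d * dm * dp)"
    using assms(1-3) by (simp add: field_simps)
  also have "\<dots> = h * x"
    using assms by simp
  finally show ?thesis .
qed

text \<open>Eigenvalues at \<open>|m, n\<rangle>\<close> of the diagonal factors of \<open>\<Delta>(E)\<close> and \<open>\<Delta>(F)\<close>; in
  \<open>coefF1\<close>, \<open>coefF2\<close> the factor \<open>(H + \<lambda>)\<^sup>-\<^sup>1\<close> has already been cancelled against the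
  factor \<open>n + \<lambda> - 1\<close> of \<open>F\<close>.\<close>

definition coefD :: "complex \<Rightarrow> complex \<Rightarrow> nat \<Rightarrow> nat \<Rightarrow> complex" where
  "coefD a b m n = 2 * of_nat m - 2 * of_nat n + 2 * (a + b) + 2"

definition coefE1 :: "complex \<Rightarrow> complex \<Rightarrow> nat \<Rightarrow> complex" where
  "coefE1 a b m = 2 * of_nat m + 2 * (a + b) + 2"

definition coefE2 :: "complex \<Rightarrow> complex \<Rightarrow> nat \<Rightarrow> complex" where
  "coefE2 a b n = 2 * (a + b) + 2 - 2 * of_nat n"

definition coefF1 :: "complex \<Rightarrow> complex \<Rightarrow> complex \<Rightarrow> complex \<Rightarrow> nat \<Rightarrow> complex" where
  "coefF1 l1 l2 a b m = - 2 * (of_nat m + 1) * (of_nat m + a + 1) * (of_nat m + b + l1 + l2)"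

definition coefF2 :: "complex \<Rightarrow> complex \<Rightarrow> complex \<Rightarrow> complex \<Rightarrow> nat \<Rightarrow> complex" where
  "coefF2 l1 l2 a b n = 2 * (of_nat n + 1) * (of_nat n - b) * (of_nat n - a + l1 + l2 - 1)"

lemma coefD_nonzero:
  assumes "a + b \<notin> \<int>"
  shows "coefD a b m n \<noteq> 0"
proof
  have "a + b = coefD a b m n / 2 + of_int (int n - int m - 1)"
    by (simp add: coefD_def field_simps)
  moreover assume "coefD a b m n = 0"
  ultimately show False
    using assms by (metis Ints_of_int add_0 div_0)
qed

lemma coefD_Suc_left: "coefD a b (Suc m) n = coefD a b m n + 2"
  and coefD_Suc_right: "coefD a b m (Suc n) = coefD a b m n - 2"
  by (simp_all add: coefD_def algebra_simps)

lemma coefD_shifts_nonzero: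
  assumes "a + b \<notin> \<int>"
  shows "coefD a b m n + 2 \<noteq> 0" "coefD a b m n - 2 \<noteq> 0"
  using coefD_nonzero[OF assms, of "Suc m" n] coefD_nonzero[OF assms, of m "Suc n"]
  by (simp_all add: coefD_Suc_left coefD_Suc_right)

lemma DeltaH_apply: "DeltaH l1 l2 v m n = (l1 + l2 + 2 * of_nat m + 2 * of_nat n) * v m n"
  by (simp add: DeltaH_def diag_def h1_def h2_def algebra_simps)

lemma DeltaE_apply:
  "DeltaE l1 l2 a b v m n =
     (coefE1 a b m * (if m = 0 then 0 else v (m - 1) n)
      + coefE2 a b n * (if n = 0 then 0 else v m (n - 1))) / coefD a b m n"
  by (simp add: DeltaE_def diag_def vadd_def E1_def E2_def coefE1_def coefE2_def coefD_def
      Dval_def h1_def h2_def field_simps)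

lemma DeltaF_apply:
  assumes hl1: "\<forall>j::nat. l1 \<noteq> - of_nat j" and hl2: "\<forall>j::nat. l2 \<noteq> - of_nat j"
  shows "DeltaF l1 l2 a b v m n =
     (coefF1 l1 l2 a b m * v (m + 1) n + coefF2 l1 l2 a b n * v m (n + 1)) / coefD a b m n"
proof -
  have "l1 * 2 + of_nat m * 2 \<noteq> 0" "l2 * 2 + of_nat n * 2 \<noteq> 0"
    using hl1 hl2 by (metis add.commute add_eq_0_iff mult_eq_0_iff distrib_right zero_neq_numeral)+
  then have
    F1: "(h1 l1 m n - l1 + 2*a + 2) * (h1 l1 m n - l1 + 2*b + 2*(l1 + l2 - 1) + 2)
           * inverse (h1 l1 m n + l1) * - (of_nat (m + 1) * (of_nat (m + 1) + l1 - 1))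
         = coefF1 l1 l2 a b m" and
    F2: "(l2 - h2 l2 m n + 2*b) * (h2 l2 m n - l2 - 2*a + 2*(l1 + l2 - 1))
           * inverse (h2 l2 m n + l2) * - (of_nat (n + 1) * (of_nat (n + 1) + l2 - 1))
         = coefF2 l1 l2 a b n"
    by (simp_all add: h1_def h2_def coefF1_def coefF2_def field_simps)
  have "Dval l1 l2 a b m n = coefD a b m n"
    by (simp add: Dval_def coefD_def h1_def h2_def)
  then show ?thesis
    unfolding DeltaF_def Let_def diag_def vadd_def F1_def F2_def mult.assoc[symmetric] F1 F2
    by (simp add: divide_inverse mult.commute)
qed

lemma DeltaE_sum:
  "DeltaE l1 l2 a b (\<lambda>m n. \<Sum>j\<in>J. c j * u j m n)
     = (\<lambda>m n. \<Sum>j\<in>J. c j * DeltaE l1 l2 a b (u j) m n)"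
  by (intro ext)
    (simp add: DeltaE_apply sum_distrib_left sum_divide_distrib sum.distrib add_divide_distrib
      distrib_left times_divide_eq_right mult.left_commute)

lemma DeltaF_sum:
  "DeltaF l1 l2 a b (\<lambda>m n. \<Sum>j\<in>J. c j * u j m n)
     = (\<lambda>m n. \<Sum>j\<in>J. c j * DeltaF l1 l2 a b (u j) m n)"
  by (intro ext)
    (simp add: DeltaF_def Let_def diag_def vadd_def F1_def F2_def sum_distrib_left sum.distrib
      distrib_left mult.left_commute)

lemma commutator_DeltaH_DeltaE:
  assumes "a + b \<notin> \<int>"
  shows "commutator (DeltaH l1 l2) (DeltaE l1 l2 a b) v = vscale 2 (DeltaE l1 l2 a b v)"
proof (intro ext)
  fix m n
  show "commutator (DeltaH l1 l2) (DeltaE l1 l2 a b) v m n = vscale 2 (DeltaE l1 l2 a b v) m n"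
    using coefD_nonzero[OF assms, of m n]
    by (cases m; cases n)
      (simp_all add: commutator_def vsub_def vscale_def DeltaE_apply DeltaH_apply field_simps)
qed

lemma commutator_DeltaH_DeltaF:
  assumes "a + b \<notin> \<int>"
    and "\<forall>j::nat. l1 \<noteq> - of_nat j" "\<forall>j::nat. l2 \<noteq> - of_nat j"
  shows "commutator (DeltaH l1 l2) (DeltaF l1 l2 a b) v = vscale (-2) (DeltaF l1 l2 a b v)"
proof (intro ext)
  fix m n
  show "commutator (DeltaH l1 l2) (DeltaF l1 l2 a b) v m n = vscale (-2) (DeltaF l1 l2 a b v) m n"
    using coefD_nonzero[OF assms(1), of m n]
    by (simp add: commutator_def vsub_def vscale_def DeltaF_apply[OF assms(2,3)] DeltaH_apply
        field_simps)
qed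

lemma DeltaE_DeltaF_apply:
  assumes "\<forall>j::nat. l1 \<noteq> - of_nat j" "\<forall>j::nat. l2 \<noteq> - of_nat j"
  shows "DeltaE l1 l2 a b (DeltaF l1 l2 a b v) m n =
    (coefE1 a b m * (((if m = 0 then 0 else coefF1 l1 l2 a b (m - 1)) * v m n
                     + coefF2 l1 l2 a b n * (if m = 0 then 0 else v (m - 1) (n + 1))) / (coefD a b m n - 2))
     + coefE2 a b n * ((coefF1 l1 l2 a b m * (if n = 0 then 0 else v (m + 1) (n - 1))
                     + (if n = 0 then 0 else coefF2 l1 l2 a b (n - 1)) * v m n) / (coefD a b m n + 2)))
    / coefD a b m n"
  by (cases m; cases n)
    (simp_all add: DeltaE_apply DeltaF_apply[OF assms] coefD_Suc_left coefD_Suc_right)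

lemma DeltaF_DeltaE_apply:
  assumes "\<forall>j::nat. l1 \<noteq> - of_nat j" "\<forall>j::nat. l2 \<noteq> - of_nat j"
  shows "DeltaF l1 l2 a b (DeltaE l1 l2 a b v) m n =
    (coefF1 l1 l2 a b m * ((coefE1 a b (m + 1) * v m n
                     + coefE2 a b n * (if n = 0 then 0 else v (m + 1) (n - 1))) / (coefD a b m n + 2))
     + coefF2 l1 l2 a b n * ((coefE1 a b m * (if m = 0 then 0 else v (m - 1) (n + 1))
                     + coefE2 a b (n + 1) * v m n) / (coefD a b m n - 2)))
    / coefD a b m n"
  by (cases m; cases n)
    (simp_all add: DeltaE_apply DeltaF_apply[OF assms] coefD_Suc_left coefD_Suc_right)

lemma commutator_EF_diagonal_coefficient:
  "coefE1 a b m * (if m = 0 then 0 else coefF1 l1 l2 a b (m - 1)) * (coefD a b m n + 2)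
   + coefE2 a b n * (if n = 0 then 0 else coefF2 l1 l2 a b (n - 1)) * (coefD a b m n - 2)
   - coefF1 l1 l2 a b m * coefE1 a b (m + 1) * (coefD a b m n - 2)
   - coefF2 l1 l2 a b n * coefE2 a b (n + 1) * (coefD a b m n + 2)
   = (l1 + l2 + 2 * of_nat m + 2 * of_nat n)
     * coefD a b m n * (coefD a b m n - 2) * (coefD a b m n + 2)"
proof -
  have "(if m = 0 then 0 else coefF1 l1 l2 a b (m - 1))
      = - 2 * of_nat m * (of_nat m + a) * (of_nat m - 1 + b + l1 + l2)"
    by (cases m) (simp_all add: coefF1_def algebra_simps)
  moreover have "(if n = 0 then 0 else coefF2 l1 l2 a b (n - 1))
      = 2 * of_nat n * (of_nat n - 1 - b) * (of_nat n - 1 - a + l1 + l2 - 1)"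
    by (cases n) (simp_all add: coefF2_def algebra_simps)
  ultimately show ?thesis
    unfolding coefE1_def coefE2_def coefF1_def coefF2_def coefD_def of_nat_add of_nat_1
    by algebra
qed

lemma commutator_DeltaE_DeltaF:
  assumes "a + b \<notin> \<int>"
    and "\<forall>j::nat. l1 \<noteq> - of_nat j" "\<forall>j::nat. l2 \<noteq> - of_nat j"
  shows "commutator (DeltaE l1 l2 a b) (DeltaF l1 l2 a b) v = DeltaH l1 l2 v"
proof (intro ext)
  fix m n
  show "commutator (DeltaE l1 l2 a b) (DeltaF l1 l2 a b) v m n = DeltaH l1 l2 v m n"
    unfolding commutator_def vsub_def DeltaE_DeltaF_apply[OF assms(2,3)]
      DeltaF_DeltaE_apply[OF assms(2,3)] DeltaH_apply
    by (rule cross_terms_cancel[OF coefD_nonzero[OF assms(1)] coefD_shifts_nonzero(2,1)[OF assms(1)]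
          commutator_EF_diagonal_coefficient])
qed

definition racahK :: "complex \<Rightarrow> complex \<Rightarrow> complex \<Rightarrow> nat \<Rightarrow> nat \<Rightarrow> complex" where
  "racahK a b g k j = pochhammer (- of_nat k) j * pochhammer (of_nat k + g) j
     / (fact j * pochhammer (a + 1) j * pochhammer (b + g + 1) j)"

text \<open>\<open>ucoef c j N p\<close> is the coefficient of \<open>|N - p, p\<rangle>\<close> in \<open>u\<^sub>j\<^sub>,\<^sub>N\<close> (with \<open>c = \<alpha> + \<beta>\<close>);
  it is only meaningful for \<open>j \<le> N\<close>, because of the truncated subtraction \<open>N - j\<close>.\<close>

definition ucoef :: "complex \<Rightarrow> nat \<Rightarrow> nat \<Rightarrow> nat \<Rightarrow> complex" where
  "ucoef c j N p = of_nat ((N - j) choose p) * pochhammer (c + 1 - of_nat p) j"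

definition uvec :: "complex \<Rightarrow> nat \<Rightarrow> nat \<Rightarrow> tvec" where
  "uvec c j N = (\<lambda>m p. if m + p = N then ucoef c j N p else 0)"

lemma racahK_eq_0: "k < j \<Longrightarrow> racahK a b g k j = 0"
  by (simp add: racahK_def pochhammer_of_nat_eq_0_iff)

lemma racahK_Suc:
  assumes "\<forall>j::nat. a \<noteq> - of_nat (Suc j)" "\<forall>j::nat. b + g \<noteq> - of_nat (Suc j)"
  shows "(of_nat j + 1) * (a + of_nat j + 1) * (b + g + of_nat j + 1) * racahK a b g k (Suc j)
       = (of_nat j - of_nat k) * (of_nat j + of_nat k + g) * racahK a b g k j"
proof -
  define r where "r = (of_nat j + 1) * (a + of_nat j + 1) * (b + g + of_nat j + 1)"
  define P where "P = pochhammer (- of_nat k) j * pochhammer (of_nat k + g) j"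
  define Q where "Q = fact j * pochhammer (a + 1) j * pochhammer (b + g + 1) j"
  have "r \<noteq> 0"
    unfolding r_def using plus_Suc_nonzero[OF assms(1)] plus_Suc_nonzero[OF assms(2)] of_nat_neq_0[of j]
    by (simp add: add.commute)
  moreover have "racahK a b g k (Suc j) = (of_nat j - of_nat k) * (of_nat j + of_nat k + g) * P / (r * Q)"
    unfolding racahK_def P_def Q_def r_def pochhammer_rec' fact_Suc by (simp add: algebra_simps)
  ultimately show ?thesis
    unfolding r_def[symmetric] by (simp add: racahK_def P_def[symmetric] Q_def[symmetric])
qed

lemma racahK_telescope:
  assumes "\<forall>j::nat. a \<noteq> - of_nat (Suc j)" "\<forall>j::nat. b + g \<noteq> - of_nat (Suc j)"
  shows "(\<Sum>j = 0..k. racahK a b g k j *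
            (- ((of_nat N - of_nat j) * (of_nat N + of_nat j + g)) * f j
             - (if j = 0 then 0 else of_nat j * (a + of_nat j) * (b + g + of_nat j) * f (j - 1))))
       = - ((of_nat N - of_nat k) * (of_nat N + of_nat k + g)) * (\<Sum>j = 0..k. racahK a b g k j * f j)"
proof -
  define G where "G j = racahK a b g k j *
    (if j = 0 then 0 else of_nat j * (a + of_nat j) * (b + g + of_nat j) * f (j - 1))" for j
  have "sum G {0..k} + G (Suc k) = G 0 + (\<Sum>i = 0..k. G (Suc i))"
    unfolding sum.atLeast0_atMost_Suc[symmetric] sum.atLeast0_atMost_Suc_shift by simp
  then have "sum G {0..k} = (\<Sum>i = 0..k. G (Suc i))"
    by (simp add: G_def racahK_eq_0)
  also have "\<dots> = (\<Sum>i = 0..k. (of_nat i - of_nat k) * (of_nat i + of_nat k + g) * racahK a b g k i * f i)"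
  proof (intro sum.cong refl)
    fix i
    have "G (Suc i)
        = (of_nat i + 1) * (a + of_nat i + 1) * (b + g + of_nat i + 1) * racahK a b g k (Suc i) * f i"
      by (simp add: G_def algebra_simps)
    then show "G (Suc i) = (of_nat i - of_nat k) * (of_nat i + of_nat k + g) * racahK a b g k i * f i"
      by (simp only: racahK_Suc[OF assms])
  qed
  finally have "sum G {0..k} = \<dots>" .
  then show ?thesis
    unfolding G_def right_diff_distrib sum_subtractf sum_distrib_left
    by (simp add: sum_subtractf[symmetric] algebra_simps)
qed

lemma Rcoef_eq_sum_racahK:
  assumes "n \<le> N" "k \<le> N"
  shows "Rcoef a b g n k N = (\<Sum>j = 0..k. racahK a b g k j * ucoef (a + b) j N (N - n))"
proof -
  have summand: "of_nat (N choose n) *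
       (pochhammer (- of_nat n) j * pochhammer (of_nat n + a + b - of_nat N + 1) j
        * pochhammer (- of_nat k) j * pochhammer (of_nat k + g) j
        / (fact j * pochhammer (a + 1) j * pochhammer (b + g + 1) j * pochhammer (- of_nat N) j))
      = racahK a b g k j * ucoef (a + b) j N (N - n)" if "j \<le> k" for j
  proof -
    have shift: "of_nat n + a + b - of_nat N + 1 = a + b + 1 - of_nat (N - n)"
      using assms(1) by (simp add: of_nat_diff)
    have quotient: "of_nat (N choose n) * pochhammer (- of_nat n) j / pochhammer (- of_nat N) j
        = (of_nat ((N - j) choose (N - n)) :: complex)"
      using that assms by (intro binomial_pochhammer_quotient) simp_all
    show ?thesis
      unfolding racahK_def ucoef_def shift quotient[symmetric]
      by (simp add: divide_inverse inverse_mult_distrib ac_simps)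
  qed
  have "Rcoef a b g n k N = (\<Sum>j = 0..min n k. racahK a b g k j * ucoef (a + b) j N (N - n))"
    unfolding Rcoef_def sum_distrib_left by (rule sum.cong[OF refl summand]) simp
  also have "\<dots> = (\<Sum>j = 0..k. racahK a b g k j * ucoef (a + b) j N (N - n))"
  proof (intro sum.mono_neutral_left ballI)
    fix j assume "j \<in> {0..k} - {0..min n k}"
    then have "N - j < N - n" using assms by auto
    then show "racahK a b g k j * ucoef (a + b) j N (N - n) = 0"
      by (simp add: ucoef_def)
  qed auto
  finally show ?thesis .
qed

lemma wvec_eq_sum_uvec:
  assumes "k \<le> N"
  shows "wvec a b g k N = (\<lambda>m p. \<Sum>j = 0..k. racahK a b g k j * uvec (a + b) j N m p)"
  using assms by (intro ext) (auto simp: wvec_def uvec_def Rcoef_eq_sum_racahK)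

lemma ucoef_E_step:
  assumes "m + p = N + 1" "j \<le> N"
  shows "coefE1 a b m * ucoef (a + b) j N p
       + coefE2 a b p * (if p = 0 then 0 else ucoef (a + b) j N (p - 1))
       = coefD a b m p * ucoef (a + b) j (N + 1) p"
proof (cases p)
  case 0
  then show ?thesis
    using assms by (simp add: ucoef_def coefE1_def coefD_def Suc_diff_le)
next
  case (Suc q)
  define s where "s = N - j"
  define y where "y = a + b - of_nat q"
  have "m + q = s + j"
    using assms unfolding s_def Suc by simp
  then have m: "of_nat m = (of_nat s + of_nat j - of_nat q :: complex)"
    by (simp add: eq_diff_eq flip: of_nat_add)
  have pascal:
    "of_nat (Suc s choose Suc q) = (of_nat (s choose q) + of_nat (s choose Suc q) :: complex)"
    by simp
  have absorb:
    "(of_nat q + 1) * of_nat (Suc s choose Suc q) = (of_nat s + 1) * (of_nat (s choose q) :: complex)"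
    using Suc_times_binomial[of q s] by (metis of_nat_Suc of_nat_mult add.commute)
  have shift: "y * pochhammer (y + 1) j = (y + of_nat j) * pochhammer y j"
    by (simp add: pochhammer_rec[symmetric] pochhammer_rec')
  have "ucoef (a + b) j N p = of_nat (s choose Suc q) * pochhammer y j"
    "ucoef (a + b) j N (p - 1) = of_nat (s choose q) * pochhammer (y + 1) j"
    "ucoef (a + b) j (N + 1) p = of_nat (Suc s choose Suc q) * pochhammer y j"
    unfolding ucoef_def s_def y_def Suc using assms(2) by (simp_all add: Suc_diff_le algebra_simps)
  then show ?thesis
    unfolding Suc coefE1_def coefE2_def coefD_def m using pascal absorb shift y_def
    by simp algebra
qed

lemma ucoef_F_step:
  assumes "m + p + 1 = N" "j \<le> N" "g = l1 + l2 - 1"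
  shows "coefF1 l1 l2 a b m * ucoef (a + b) j N p + coefF2 l1 l2 a b p * ucoef (a + b) j N (p + 1)
       = coefD a b m p *
           (- ((of_nat N - of_nat j) * (of_nat N + of_nat j + g)) * ucoef (a + b) j (N - 1) p
            - (if j = 0 then 0
               else of_nat j * (a + of_nat j) * (b + g + of_nat j) * ucoef (a + b) (j - 1) (N - 1) p))"
proof -
  define s where "s = N - j"
  define y where "y = a + b + 1 - of_nat p"
  have "m + p + 1 = s + j"
    using assms unfolding s_def by simp
  then have "of_nat m + of_nat p + 1 = (of_nat s + of_nat j :: complex)"
    by (metis of_nat_add of_nat_1)
  then have m: "of_nat m = (of_nat s + of_nat j - of_nat p - 1 :: complex)"
    by (simp add: algebra_simps)
  have Nj: "of_nat N - of_nat j = (of_nat s :: complex)"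
    using assms(2) by (simp add: s_def of_nat_diff)
  note B1 = of_nat_Suc_times_binomial_Suc[of p s, where 'a = complex]
  note B2 = of_nat_times_binomial_pred[of s p, where 'a = complex]
  show ?thesis
  proof (cases j)
    case 0
    show ?thesis
      using B1 B2 unfolding ucoef_def coefF1_def coefF2_def coefD_def m Nj assms(3) s_def 0
      by simp algebra
  next
    case (Suc i)
    then have "j \<noteq> 0" by simp
    have y: "pochhammer y j = pochhammer y i * (y + of_nat i)"
      unfolding Suc by (simp only: pochhammer_rec' mult.commute)
    have y1: "pochhammer (y - 1) j = (y - 1) * pochhammer y i"
      unfolding Suc by (simp add: pochhammer_rec)
    have "a + b + 1 - of_nat (p + 1) = y - 1" "N - 1 - (j - 1) = s" "N - 1 - j = s - 1"
      using assms(2) unfolding y_def s_def Suc by simp_all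
    then have "ucoef (a + b) j N p = of_nat (s choose p) * (pochhammer y i * (y + of_nat i))"
      "ucoef (a + b) j N (p + 1) = of_nat (s choose Suc p) * ((y - 1) * pochhammer y i)"
      "ucoef (a + b) j (N - 1) p = of_nat ((s - 1) choose p) * (pochhammer y i * (y + of_nat i))"
      "ucoef (a + b) (j - 1) (N - 1) p = of_nat (s choose p) * pochhammer y i"
      unfolding ucoef_def y_def[symmetric] s_def[symmetric] y[symmetric] y1[symmetric]
      by (simp_all add: Suc)
    note u = this
    have poly: "coefF1 l1 l2 a b m * (y + of_nat i)
          + 2 * (of_nat p - b) * (of_nat p - a + g) * (of_nat s - of_nat p) * (y - 1)
        = coefD a b m p * (- ((of_nat N + of_nat j + g) * (of_nat s - of_nat p) * (y + of_nat i))
                           - of_nat j * (a + of_nat j) * (b + g + of_nat j))"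
      unfolding coefF1_def coefD_def m y_def assms(3) Nj[symmetric] Suc of_nat_Suc by algebra
    show ?thesis
      unfolding u if_not_P[OF \<open>j \<noteq> 0\<close>] coefF2_def Nj
      using B1 B2 poly assms(3) by algebra
  qed
qed

lemma DeltaE_uvec:
  assumes "a + b \<notin> \<int>" "j \<le> N"
  shows "DeltaE l1 l2 a b (uvec (a + b) j N) = uvec (a + b) j (N + 1)"
proof (intro ext)
  fix m p
  show "DeltaE l1 l2 a b (uvec (a + b) j N) m p = uvec (a + b) j (N + 1) m p"
  proof (cases "m + p = N + 1")
    case True
    moreover have "m = 0 \<Longrightarrow> ucoef (a + b) j N p = 0"
      using True by (simp add: ucoef_def binomial_eq_0)
    ultimately show ?thesis
      using ucoef_E_step[OF True assms(2), of a b] coefD_nonzero[OF assms(1), of m p]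
      by (auto simp: DeltaE_apply uvec_def field_simps)
  next
    case False
    then show ?thesis
      by (auto simp: DeltaE_apply uvec_def)
  qed
qed

lemma DeltaF_uvec:
  assumes "a + b \<notin> \<int>" "\<forall>j::nat. l1 \<noteq> - of_nat j" "\<forall>j::nat. l2 \<noteq> - of_nat j"
    and "g = l1 + l2 - 1" "j \<le> N"
  shows "DeltaF l1 l2 a b (uvec (a + b) j N) =
    (\<lambda>m p. - ((of_nat N - of_nat j) * (of_nat N + of_nat j + g)) * uvec (a + b) j (N - 1) m p
      - (if j = 0 then 0
         else of_nat j * (a + of_nat j) * (b + g + of_nat j) * uvec (a + b) (j - 1) (N - 1) m p))"
proof (intro ext)
  fix m p
  show "DeltaF l1 l2 a b (uvec (a + b) j N) m p =
    - ((of_nat N - of_nat j) * (of_nat N + of_nat j + g)) * uvec (a + b) j (N - 1) m p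
      - (if j = 0 then 0
         else of_nat j * (a + of_nat j) * (b + g + of_nat j) * uvec (a + b) (j - 1) (N - 1) m p)"
  proof (cases "m + p + 1 = N")
    case True
    then show ?thesis
      using ucoef_F_step[OF True assms(5,4)] coefD_nonzero[OF assms(1), of m p]
      by (auto simp: DeltaF_apply[OF assms(2,3)] uvec_def field_simps)
  next
    case False
    then show ?thesis
      using assms(5) by (auto simp: DeltaF_apply[OF assms(2,3)] uvec_def)
  qed
qed

lemma DeltaH_wvec: "DeltaH l1 l2 (wvec a b g k N) = vscale (l1 + l2 + 2 * of_nat N) (wvec a b g k N)"
proof (intro ext)
  fix m p
  show "DeltaH l1 l2 (wvec a b g k N) m p = vscale (l1 + l2 + 2 * of_nat N) (wvec a b g k N) m p"
    by (cases "m + p = N") (auto simp: DeltaH_apply vscale_def wvec_def algebra_simps)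
qed

lemma DeltaE_wvec:
  assumes "a + b \<notin> \<int>" "k \<le> N"
  shows "DeltaE l1 l2 a b (wvec a b g k N) = wvec a b g k (N + 1)"
  using assms by (simp add: wvec_eq_sum_uvec DeltaE_sum DeltaE_uvec)

lemma DeltaF_wvec:
  assumes "a + b \<notin> \<int>" "\<forall>j::nat. l1 \<noteq> - of_nat j" "\<forall>j::nat. l2 \<noteq> - of_nat j"
    and "g = l1 + l2 - 1"
    and "\<forall>j::nat. a \<noteq> - of_nat (Suc j)" "\<forall>j::nat. b + g \<noteq> - of_nat (Suc j)"
    and "k \<le> N"
  shows "DeltaF l1 l2 a b (wvec a b g k N) =
    (if N = k then vzero
     else vscale (- (of_nat (N - k) * (of_nat N + of_nat k + g))) (wvec a b g k (N - 1)))"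
proof -
  have "DeltaF l1 l2 a b (wvec a b g k N) m p
      = - ((of_nat N - of_nat k) * (of_nat N + of_nat k + g))
        * (\<Sum>j = 0..k. racahK a b g k j * uvec (a + b) j (N - 1) m p)" for m p
  proof -
    have "DeltaF l1 l2 a b (wvec a b g k N) m p
        = (\<Sum>j = 0..k. racahK a b g k j * DeltaF l1 l2 a b (uvec (a + b) j N) m p)"
      by (simp add: wvec_eq_sum_uvec[OF assms(7)] DeltaF_sum)
    also have "\<dots> = (\<Sum>j = 0..k. racahK a b g k j *
        (- ((of_nat N - of_nat j) * (of_nat N + of_nat j + g)) * uvec (a + b) j (N - 1) m p
         - (if j = 0 then 0
            else of_nat j * (a + of_nat j) * (b + g + of_nat j) * uvec (a + b) (j - 1) (N - 1) m p)))"
      using assms(7) by (intro sum.cong refl) (simp add: DeltaF_uvec[OF assms(1-4)])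
    also have "\<dots> = - ((of_nat N - of_nat k) * (of_nat N + of_nat k + g))
        * (\<Sum>j = 0..k. racahK a b g k j * uvec (a + b) j (N - 1) m p)"
      by (rule racahK_telescope[OF assms(5,6)])
    finally show ?thesis .
  qed
  then have "DeltaF l1 l2 a b (wvec a b g k N)
      = (\<lambda>m p. - ((of_nat N - of_nat k) * (of_nat N + of_nat k + g))
          * (\<Sum>j = 0..k. racahK a b g k j * uvec (a + b) j (N - 1) m p))"
    by (intro ext)
  then show ?thesis
    using assms(7) by (auto simp: vzero_def vscale_def wvec_eq_sum_uvec of_nat_diff)
qed

theorem mainTheorem4:
  fixes l1 l2 a b g :: complex
  assumes hl1: "\<forall>j::nat. l1 \<noteq> - of_nat j"
    and hl2: "\<forall>j::nat. l2 \<noteq> - of_nat j"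
    and hg: "g = l1 + l2 - 1"
    and hab: "a + b \<notin> \<int>"
    and ha: "\<forall>j::nat. a \<noteq> - of_nat (Suc j)"
    and hbg: "\<forall>j::nat. b + g \<noteq> - of_nat (Suc j)"
  shows "(\<forall>v. in_W v \<longrightarrow>
            commutator (DeltaH l1 l2) (DeltaE l1 l2 a b) v = vscale 2 (DeltaE l1 l2 a b v) \<and>
            commutator (DeltaH l1 l2) (DeltaF l1 l2 a b) v = vscale (-2) (DeltaF l1 l2 a b v) \<and>
            commutator (DeltaE l1 l2 a b) (DeltaF l1 l2 a b) v = DeltaH l1 l2 v)
       \<and> (\<forall>k N::nat. k \<le> N \<longrightarrow>
            DeltaH l1 l2 (wvec a b g k N) = vscale (l1 + l2 + 2 * of_nat N) (wvec a b g k N) \<and>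
            DeltaE l1 l2 a b (wvec a b g k N) = wvec a b g k (N + 1) \<and>
            DeltaF l1 l2 a b (wvec a b g k N) =
              (if N = k then vzero
               else vscale (- (of_nat (N - k) * (of_nat N + of_nat k + g))) (wvec a b g k (N - 1))))"
  using commutator_DeltaH_DeltaE[OF hab] commutator_DeltaH_DeltaF[OF hab hl1 hl2]
    commutator_DeltaE_DeltaF[OF hab hl1 hl2] DeltaH_wvec DeltaE_wvec[OF hab]
    DeltaF_wvec[OF hab hl1 hl2 hg ha hbg]
  by simp

end
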